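(* Let $G$ be a compactly generated (second countable) locally compact group, $X$ a compact (metrizable) $G$-space, and $(\mu_n)$ a sequence of $G$-invariant Borel probability measures on $X$ with uniform spectral gap. If $\mu$ is a weak-$*$ limit of the sequence $(\mu_n)$, then $(X,\mu)$ has spectral gap.
   Context: A Borel $G$-space $(X,\mu)$ with invariant probability measure has spectral gap if the Koopman representation of $G$ on $L^2_0(X,\mu)=\{f\in L^2(X,\mu):\int f\,d\mu=0\}$ does not almost have invariant vectors. A sequence $(X_n,\mu_n)$ of such spaces has uniform spectral gap if the natural representation of $G$ on $\bigoplus_n L^2_0(X_n,\mu_n)$ does not almost have invariant vectors. *)

theory Defs
  imports "HOL-Analysis.Analysis" "HOL-Probability.Probability"
begin

text \<open>Topological groups are written additively (type class topological_group_add,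
  not assumed commutative): the group law is +, identity 0, inverse uminus.\<close>

definition generated_subgroup :: "'g::group_add set \<Rightarrow> 'g set" where
  "generated_subgroup K = \<Inter>{H. K \<subseteq> H \<and> 0 \<in> H \<and> (\<forall>a\<in>H. \<forall>b\<in>H. a + b \<in> H) \<and> (\<forall>a\<in>H. - a \<in> H)}"

definition compactly_generated :: "'g::{group_add,topological_space} itself \<Rightarrow> bool" where
  "compactly_generated _ \<longleftrightarrow> (\<exists>K::'g set. compact K \<and> generated_subgroup K = UNIV)"

definition continuous_action :: "('g::{group_add,topological_space} \<Rightarrow> 'x::topological_space \<Rightarrow> 'x) \<Rightarrow> bool" where
  "continuous_action act \<longleftrightarrow>
     continuous_on UNIV (\<lambda>(g, x). act g x) \<and> (\<forall>x. act 0 x = x) \<and>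
     (\<forall>g h x. act (g + h) x = act g (act h x))"

definition borel_prob :: "'x::topological_space measure \<Rightarrow> bool" where
  "borel_prob M \<longleftrightarrow> prob_space M \<and> sets M = sets borel"

definition invariant_measure :: "('g \<Rightarrow> 'x \<Rightarrow> 'x) \<Rightarrow> 'x::topological_space measure \<Rightarrow> bool" where
  "invariant_measure act M \<longleftrightarrow> (\<forall>g. \<forall>A\<in>sets M. emeasure M (act g -` A \<inter> space M) = emeasure M A)"

definition L2_0 :: "'x measure \<Rightarrow> ('x \<Rightarrow> complex) \<Rightarrow> bool" where
  "L2_0 M f \<longleftrightarrow> f \<in> borel_measurable M \<and> integrable M (\<lambda>x. (cmod (f x))\<^sup>2) \<and>
                 (LINT x|M. f x) = 0"

definition L2_norm_sq :: "'x measure \<Rightarrow> ('x \<Rightarrow> complex) \<Rightarrow> real" where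
  "L2_norm_sq M f = (LINT x|M. (cmod (f x))\<^sup>2)"

definition koopman :: "('g::group_add \<Rightarrow> 'x \<Rightarrow> 'x) \<Rightarrow> 'g \<Rightarrow> ('x \<Rightarrow> complex) \<Rightarrow> ('x \<Rightarrow> complex)" where
  "koopman act g f = (\<lambda>x. f (act (- g) x))"

definition almost_inv_L2_0 ::
  "('g::{group_add,topological_space} \<Rightarrow> 'x \<Rightarrow> 'x) \<Rightarrow> 'x measure \<Rightarrow> bool" where
  "almost_inv_L2_0 act M \<longleftrightarrow>
     (\<forall>Q::'g set. \<forall>\<epsilon>>0. compact Q \<longrightarrow>
        (\<exists>f. L2_0 M f \<and> L2_norm_sq M f = 1 \<and>
             (\<forall>g\<in>Q. sqrt (L2_norm_sq M (\<lambda>x. koopman act g f x - f x)) < \<epsilon>)))"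

definition spectral_gap :: "('g::{group_add,topological_space} \<Rightarrow> 'x \<Rightarrow> 'x) \<Rightarrow> 'x measure \<Rightarrow> bool" where
  "spectral_gap act M \<longleftrightarrow> \<not> almost_inv_L2_0 act M"

text \<open>Representation on the Hilbert direct sum of the L^2_0(X,M n) almost has invariant
  vectors; elements of the direct sum are sequences (f n) with f n in L^2_0(M n) and
  sum of squared norms finite.\<close>
definition almost_inv_direct_sum ::
  "('g::{group_add,topological_space} \<Rightarrow> 'x \<Rightarrow> 'x) \<Rightarrow> (nat \<Rightarrow> 'x measure) \<Rightarrow> bool" where
  "almost_inv_direct_sum act M \<longleftrightarrow>
     (\<forall>Q::'g set. \<forall>\<epsilon>>0. compact Q \<longrightarrow>
        (\<exists>f :: nat \<Rightarrow> 'x \<Rightarrow> complex.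
             (\<forall>n. L2_0 (M n) (f n)) \<and> ((\<lambda>n. L2_norm_sq (M n) (f n)) sums 1) \<and>
             (\<forall>g\<in>Q. summable (\<lambda>n. L2_norm_sq (M n) (\<lambda>x. koopman act g (f n) x - f n x)) \<and>
                     sqrt (\<Sum>n. L2_norm_sq (M n) (\<lambda>x. koopman act g (f n) x - f n x)) < \<epsilon>)))"

definition uniform_spectral_gap ::
  "('g::{group_add,topological_space} \<Rightarrow> 'x \<Rightarrow> 'x) \<Rightarrow> (nat \<Rightarrow> 'x measure) \<Rightarrow> bool" where
  "uniform_spectral_gap act M \<longleftrightarrow> \<not> almost_inv_direct_sum act M"

definition weak_star_converges :: "(nat \<Rightarrow> 'x::topological_space measure) \<Rightarrow> 'x measure \<Rightarrow> bool" where
  "weak_star_converges M N \<longleftrightarrow>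
     (\<forall>f::'x \<Rightarrow> real. continuous_on UNIV f \<longrightarrow>
        (\<lambda>n. LINT x|M n. f x) \<longlonglongrightarrow> (LINT x|N. f x))"

end

theory Submission
  imports Defs
begin

text \<open>Suppose the Koopman representation on \<open>L\<^sup>2\<^sub>0(X,\<mu>)\<close> almost has invariant vectors. As a
  weak-* limit of invariant measures, \<open>\<mu>\<close> is itself invariant, and since continuous functions are
  dense in \<open>L\<^sup>2(\<mu>)\<close> an almost invariant unit vector can be replaced by a continuous function \<open>h\<close>
  of variance bounded below whose displacements \<open>\<integral>|h(-g\<cdot>x) - h x|\<^sup>2 d\<mu>\<close> are small for all \<open>g\<close>
  in a compact set \<open>Q\<close>. The variance and the displacements of \<open>h\<close> are integrals of continuous
  functions, hence converge along \<open>\<mu>\<^sub>n\<close>, and by compactness of \<open>Q\<close> and \<open>X\<close> uniformly in \<open>g \<in> Q\<close>.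
  So for one large \<open>N\<close> the normalised centring of \<open>h\<close> in \<open>L\<^sup>2\<^sub>0(X,\<mu>\<^sub>N)\<close> is an almost invariant
  unit vector of the direct sum, contradicting the uniform spectral gap.\<close>

lemma LIMSEQ_obtain_less:
  fixes X :: "nat \<Rightarrow> 'a::linorder_topology"
  assumes "X \<longlonglongrightarrow> L" "L < a"
  obtains n where "X n < a"
  using eventually_happens'[OF sequentially_bot order_tendstoD(2)[OF assms]] by blast

lemma LIMSEQ_obtain_greater:
  fixes X :: "nat \<Rightarrow> 'a::linorder_topology"
  assumes "X \<longlonglongrightarrow> L" "a < L"
  obtains n where "a < X n"
  using eventually_happens'[OF sequentially_bot order_tendstoD(1)[OF assms]] by blast

section \<open>Continuous functions and finite Borel measures\<close>

lemma borel_measurable_continuous_on_sets_borel: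
  fixes h :: "'x::topological_space \<Rightarrow> 'b::topological_space"
  assumes "sets M = sets borel" "continuous_on UNIV h"
  shows "h \<in> borel_measurable M"
  unfolding measurable_cong_sets[OF assms(1) refl] by (rule borel_measurable_continuous_onI[OF assms(2)])

lemma integrable_continuous_on_compact_UNIV:
  fixes h :: "'x::metric_space \<Rightarrow> 'b::{banach,second_countable_topology}"
  assumes "compact (UNIV::'x set)" "finite_measure M" "sets M = sets borel" "continuous_on UNIV h"
  shows "integrable M h"
proof -
  have "compact (range h)" using compact_continuous_image assms by blast
  then obtain B where B: "\<forall>y\<in>range h. norm y \<le> B" using compact_imp_bounded bounded_iff by metis
  show ?thesis
    by (rule finite_measure.integrable_const_bound[OF assms(2), of _ B])
       (use B borel_measurable_continuous_on_sets_borel[OF assms(3,4)] in auto)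
qed

lemma continuous_approx_indicator_open:
  fixes U :: "'x::metric_space set"
  assumes "open U"
  obtains h :: "nat \<Rightarrow> 'x \<Rightarrow> real" where "\<And>k. continuous_on UNIV (h k)"
    "\<And>k x. 0 \<le> h k x \<and> h k x \<le> 1" "\<And>x. (\<lambda>k. h k x) \<longlonglongrightarrow> indicator U x"
proof (cases "U = UNIV")
  case True
  show ?thesis by (rule that[of "\<lambda>k x. 1"]) (auto simp: True)
next
  case False
  define h where "h k x = min 1 (real k * infdist x (- U))" for k x
  show ?thesis
  proof (rule that[of h])
    show "continuous_on UNIV (h k)" for k
      unfolding h_def by (intro continuous_intros)
    show "0 \<le> h k x \<and> h k x \<le> 1" for k x
      unfolding h_def by (simp add: infdist_nonneg)
    show "(\<lambda>k. h k x) \<longlonglongrightarrow> indicator U x" for x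
    proof (cases "x \<in> U")
      case True
      have d: "0 < infdist x (- U)"
        using infdist_pos_not_in_closed[of "- U" x] False True assms by auto
      obtain N where N: "1 / infdist x (- U) < real N" using reals_Archimedean2 by blast
      have "eventually (\<lambda>k. h k x = 1) sequentially"
        unfolding eventually_sequentially
      proof (intro exI allI impI)
        fix k assume "N \<le> k"
        then have "1 / infdist x (- U) < real k" using N by linarith
        then have "1 \<le> real k * infdist x (- U)" using d by (simp add: field_simps)
        then show "h k x = 1" unfolding h_def by simp
      qed
      then show ?thesis using True by (simp add: tendsto_eventually)
    next
      case False
      then have "infdist x (- U) = 0" by (simp add: infdist_zero)
      then show ?thesis using False by (simp add: h_def)
    qed
  qed
qed

lemma finite_measure_eq_if_integral_continuous_eq:
  fixes M N :: "'x::metric_space measure"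
  assumes M: "finite_measure M" "sets M = sets borel" and N: "finite_measure N" "sets N = sets borel"
    and eq: "\<And>\<phi>::'x \<Rightarrow> real. continuous_on UNIV \<phi> \<Longrightarrow> (\<forall>x. 0 \<le> \<phi> x \<and> \<phi> x \<le> 1) \<Longrightarrow>
               (\<integral>x. \<phi> x \<partial>M) = (\<integral>x. \<phi> x \<partial>N)"
  shows "M = N"
proof (rule measure_eqI_generator_eq[where E="{S. open S}" and \<Omega>=UNIV and A="\<lambda>_. UNIV"])
  show "Int_stable {S::'x set. open S}" unfolding Int_stable_def by (simp add: open_Int)
  show "sets M = sigma_sets UNIV {S. open S}" using M(2) sets_borel by (rule trans)
  show "sets N = sigma_sets UNIV {S. open S}" using N(2) sets_borel by (rule trans)
  show "emeasure M UNIV \<noteq> \<infinity>" for i::nat using finite_measure.emeasure_finite[OF M(1)] by simp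
  fix U :: "'x set" assume "U \<in> {S. open S}"
  then have U: "open U" by simp
  obtain h :: "nat \<Rightarrow> 'x \<Rightarrow> real" where h: "\<And>k. continuous_on UNIV (h k)"
    "\<And>k x. 0 \<le> h k x \<and> h k x \<le> 1" "\<And>x. (\<lambda>k. h k x) \<longlonglongrightarrow> indicator U x"
    using continuous_approx_indicator_open[OF U] by blast
  have lim: "(\<lambda>k. \<integral>x. h k x \<partial>L) \<longlonglongrightarrow> measure L U"
    if L: "finite_measure L" "sets L = sets borel" for L :: "'x measure"
  proof -
    have "(\<lambda>k. \<integral>x. h k x \<partial>L) \<longlonglongrightarrow> (\<integral>x. indicator U x \<partial>L)"
    proof (rule integral_dominated_convergence[where w="\<lambda>x. 1"])
      show "indicator U \<in> borel_measurable L"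
        unfolding measurable_cong_sets[OF L(2) refl] using U by (intro borel_measurable_indicator borel_open)
      show "h k \<in> borel_measurable L" for k
        using borel_measurable_continuous_on_sets_borel[OF L(2) h(1)] .
      show "integrable L (\<lambda>x. 1::real)" using finite_measure.integrable_const[OF L(1)] .
      show "AE x in L. (\<lambda>k. h k x) \<longlonglongrightarrow> indicator U x" using h(3) by (intro AE_I2)
      show "AE x in L. norm (h k x) \<le> 1" for k using h(2) by (intro AE_I2) (simp add: abs_le_iff)
    qed
    moreover have "space L = UNIV" using L(2) by (metis sets_eq_imp_space_eq space_borel)
    ultimately show ?thesis by simp
  qed
  have "(\<lambda>k. \<integral>x. h k x \<partial>M) = (\<lambda>k. \<integral>x. h k x \<partial>N)" using eq h(1,2) by blast
  then have "measure M U = measure N U" using LIMSEQ_unique[OF lim[OF M]] lim[OF N] by metis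
  then show "emeasure M U = emeasure N U"
    using finite_measure.emeasure_eq_measure[OF M(1)] finite_measure.emeasure_eq_measure[OF N(1)] by simp
qed (auto)

lemma integral_cmod_diff_triangle:
  fixes f g h :: "'a \<Rightarrow> complex"
  assumes "integrable M (\<lambda>x. f x - g x)" "integrable M (\<lambda>x. g x - h x)"
  shows "(\<integral>x. cmod (f x - h x) \<partial>M) \<le> (\<integral>x. cmod (f x - g x) \<partial>M) + (\<integral>x. cmod (g x - h x) \<partial>M)"
proof -
  have i: "integrable M (\<lambda>x. cmod (f x - g x))" "integrable M (\<lambda>x. cmod (g x - h x))"
    using assms by auto
  have "integrable M (\<lambda>x. (f x - g x) + (g x - h x))" using assms by (rule Bochner_Integration.integrable_add)
  then have "integrable M (\<lambda>x. cmod (f x - h x))" by simp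
  then have "(\<integral>x. cmod (f x - h x) \<partial>M) \<le> (\<integral>x. cmod (f x - g x) + cmod (g x - h x) \<partial>M)"
    by (rule integral_mono[OF _ Bochner_Integration.integrable_add[OF i]])
       (metis diff_add_cancel add_diff_eq norm_triangle_ineq diff_diff_eq2)
  also have "\<dots> = (\<integral>x. cmod (f x - g x) \<partial>M) + (\<integral>x. cmod (g x - h x) \<partial>M)"
    by (rule Bochner_Integration.integral_add[OF i])
  finally show ?thesis .
qed

definition L1_approximable :: "'x::metric_space measure \<Rightarrow> ('x \<Rightarrow> complex) \<Rightarrow> bool" where
  "L1_approximable M f \<longleftrightarrow> (\<forall>e>0. \<exists>h. continuous_on UNIV h \<and> (\<integral>x. cmod (f x - h x) \<partial>M) < e)"

locale compact_finite_borel =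
  fixes M :: "'x::metric_space measure"
  assumes compact_UNIV: "compact (UNIV::'x set)"
    and finite: "finite_measure M"
    and sets_eq: "sets M = sets borel"
begin

lemma space_eq: "space M = UNIV"
  using sets_eq by (metis sets_eq_imp_space_eq space_borel)

lemma integrable_continuous:
  "continuous_on UNIV h \<Longrightarrow> integrable M (h :: 'x \<Rightarrow> 'b::{banach,second_countable_topology})"
  using integrable_continuous_on_compact_UNIV[OF compact_UNIV finite sets_eq] .

lemma integrable_indicator: "A \<in> sets M \<Longrightarrow> integrable M (\<lambda>x. indicator A x :: complex)"
  by (rule finite_measure.integrable_const_bound[OF finite, of _ 1]) (auto simp: indicator_def)

lemma L1_approximable_zero: "L1_approximable M (\<lambda>x. 0)"
  unfolding L1_approximable_def by (intro allI impI exI[of _ "\<lambda>x. 0"]) auto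

lemma L1_approximable_limit:
  assumes f: "integrable M f"
    and approx: "\<And>e. e > 0 \<Longrightarrow> \<exists>g. integrable M g \<and> L1_approximable M g \<and> (\<integral>x. cmod (f x - g x) \<partial>M) < e"
  shows "L1_approximable M f"
  unfolding L1_approximable_def
proof (intro allI impI)
  fix e :: real assume e: "e > 0"
  obtain g where g: "integrable M g" "L1_approximable M g" "(\<integral>x. cmod (f x - g x) \<partial>M) < e/2"
    using approx[of "e/2"] e by auto
  obtain h where h: "continuous_on UNIV h" "(\<integral>x. cmod (g x - h x) \<partial>M) < e/2"
    using g(2) e unfolding L1_approximable_def by (meson half_gt_zero)
  have "(\<integral>x. cmod (f x - h x) \<partial>M) \<le> (\<integral>x. cmod (f x - g x) \<partial>M) + (\<integral>x. cmod (g x - h x) \<partial>M)"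
    by (rule integral_cmod_diff_triangle) (use f g(1) integrable_continuous[OF h(1)] in auto)
  then show "\<exists>h. continuous_on UNIV h \<and> (\<integral>x. cmod (f x - h x) \<partial>M) < e"
    using g(3) h by (intro exI[of _ h]) auto
qed

lemma L1_approximable_add:
  assumes f: "integrable M f" "L1_approximable M f" and g: "integrable M g" "L1_approximable M g"
  shows "L1_approximable M (\<lambda>x. f x + g x)"
  unfolding L1_approximable_def
proof (intro allI impI)
  fix e :: real assume e: "e > 0"
  obtain h1 where h1: "continuous_on UNIV h1" "(\<integral>x. cmod (f x - h1 x) \<partial>M) < e/2"
    using f(2) e unfolding L1_approximable_def by (meson half_gt_zero)
  obtain h2 where h2: "continuous_on UNIV h2" "(\<integral>x. cmod (g x - h2 x) \<partial>M) < e/2"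
    using g(2) e unfolding L1_approximable_def by (meson half_gt_zero)
  have i: "integrable M (\<lambda>x. cmod (f x - h1 x))" "integrable M (\<lambda>x. cmod (g x - h2 x))"
    "integrable M (\<lambda>x. cmod (f x + g x - (h1 x + h2 x)))"
    using f(1) g(1) integrable_continuous[OF h1(1)] integrable_continuous[OF h2(1)] by auto
  have "(\<integral>x. cmod (f x + g x - (h1 x + h2 x)) \<partial>M) \<le> (\<integral>x. cmod (f x - h1 x) + cmod (g x - h2 x) \<partial>M)"
    by (rule integral_mono[OF i(3) Bochner_Integration.integrable_add[OF i(1,2)]])
       (metis add_diff_add norm_triangle_ineq)
  also have "\<dots> = (\<integral>x. cmod (f x - h1 x) \<partial>M) + (\<integral>x. cmod (g x - h2 x) \<partial>M)"
    by (rule Bochner_Integration.integral_add[OF i(1,2)])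
  finally have "(\<integral>x. cmod (f x + g x - (h1 x + h2 x)) \<partial>M) < e" using h1(2) h2(2) by linarith
  then show "\<exists>h. continuous_on UNIV h \<and> (\<integral>x. cmod (f x + g x - h x) \<partial>M) < e"
    using h1(1) h2(1) by (intro exI[of _ "\<lambda>x. h1 x + h2 x"]) (auto intro: continuous_on_add)
qed

lemma L1_approximable_mult:
  assumes "L1_approximable M f"
  shows "L1_approximable M (\<lambda>x. f x * c)"
  unfolding L1_approximable_def
proof (intro allI impI)
  fix e :: real assume e: "e > 0"
  show "\<exists>h. continuous_on UNIV h \<and> (\<integral>x. cmod (f x * c - h x) \<partial>M) < e"
  proof (cases "c = 0")
    case True
    then show ?thesis using e by (intro exI[of _ "\<lambda>x. 0"]) auto
  next
    case False
    then have c: "cmod c > 0" by simp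
    obtain h where h: "continuous_on UNIV h" "(\<integral>x. cmod (f x - h x) \<partial>M) < e / cmod c"
      using assms e c unfolding L1_approximable_def by (meson divide_pos_pos)
    have "(\<integral>x. cmod (f x * c - h x * c) \<partial>M) = (\<integral>x. cmod (f x - h x) \<partial>M) * cmod c"
      by (simp add: left_diff_distrib[symmetric] norm_mult)
    also have "\<dots> < e" using h(2) c by (simp add: pos_less_divide_eq)
    finally show ?thesis using h(1) by (intro exI[of _ "\<lambda>x. h x * c"]) (auto intro: continuous_on_mult_right)
  qed
qed

lemma L1_approximable_indicator_open:
  assumes U: "open U"
  shows "L1_approximable M (indicator U)"
  unfolding L1_approximable_def
proof (intro allI impI)
  fix e :: real assume e: "e > 0"
  obtain h :: "nat \<Rightarrow> 'x \<Rightarrow> real" where h: "\<And>k. continuous_on UNIV (h k)"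
    "\<And>k x. 0 \<le> h k x \<and> h k x \<le> 1" "\<And>x. (\<lambda>k. h k x) \<longlonglongrightarrow> indicator U x"
    using continuous_approx_indicator_open[OF U] by blast
  have UM: "U \<in> sets M" using U sets_eq by simp
  have "(\<lambda>k. \<integral>x. cmod (indicator U x - complex_of_real (h k x)) \<partial>M) \<longlonglongrightarrow> (\<integral>x. 0 \<partial>M)"
  proof (rule integral_dominated_convergence[where w="\<lambda>x. 1"])
    show "(\<lambda>x. cmod (indicator U x - complex_of_real (h k x))) \<in> borel_measurable M" for k
      using integrable_indicator[OF UM] integrable_continuous[OF continuous_on_of_real[OF h(1)[of k]]]
      by (intro borel_measurable_integrable integrable_norm Bochner_Integration.integrable_diff)
    show "integrable M (\<lambda>x. 1::real)" using finite_measure.integrable_const[OF finite] .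
    show "AE x in M. (\<lambda>k. cmod (indicator U x - complex_of_real (h k x))) \<longlonglongrightarrow> 0"
    proof (intro AE_I2)
      fix x
      have "(\<lambda>k. complex_of_real (h k x)) \<longlonglongrightarrow> indicator U x"
        using tendsto_of_real[OF h(3)[of x], where 'a=complex] by (cases "x \<in> U") simp_all
      then have "(\<lambda>k. indicator U x - complex_of_real (h k x)) \<longlonglongrightarrow> 0"
        using tendsto_diff[OF tendsto_const, of _ "indicator U x" _ "indicator U x"] by simp
      then show "(\<lambda>k. cmod (indicator U x - complex_of_real (h k x))) \<longlonglongrightarrow> 0"
        by (rule tendsto_norm_zero)
    qed
    show "AE x in M. norm (cmod (indicator U x - complex_of_real (h k x))) \<le> 1" for k
    proof (intro AE_I2)
      fix x
      show "norm (cmod (indicator U x - complex_of_real (h k x))) \<le> 1"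
        using h(2)[of k x] norm_of_real[of "1 - h k x", where 'a=complex]
        by (cases "x \<in> U") (auto simp: indicator_def)
    qed
  qed simp
  then obtain k where "(\<integral>x. cmod (indicator U x - complex_of_real (h k x)) \<partial>M) < e"
    by (rule LIMSEQ_obtain_less[where a=e]) (use e in simp)
  then show "\<exists>g. continuous_on UNIV g \<and> (\<integral>x. cmod (indicator U x - g x) \<partial>M) < e"
    using continuous_on_of_real[OF h(1)[of k]] by blast
qed

lemma L1_approximable_indicator_compl:
  assumes "L1_approximable M (indicator A)"
  shows "L1_approximable M (indicator (UNIV - A))"
  unfolding L1_approximable_def
proof (intro allI impI)
  fix e :: real assume e: "e > 0"
  obtain h where h: "continuous_on UNIV h" "(\<integral>x. cmod (indicator A x - h x) \<partial>M) < e"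
    using assms e unfolding L1_approximable_def by blast
  have "(\<integral>x. cmod (indicator (UNIV - A) x - (1 - h x)) \<partial>M) = (\<integral>x. cmod (indicator A x - h x) \<partial>M)"
    by (rule Bochner_Integration.integral_cong) (auto simp: indicator_def norm_minus_commute)
  then show "\<exists>g. continuous_on UNIV g \<and> (\<integral>x. cmod (indicator (UNIV - A) x - g x) \<partial>M) < e"
    using h by (intro exI[of _ "\<lambda>x. 1 - h x"]) (auto intro: continuous_intros)
qed

end

context compact_finite_borel
begin

lemma L1_approximable_indicator_UNION:
  fixes A :: "nat \<Rightarrow> 'x set"
  assumes A: "disjoint_family A" "\<And>i. A i \<in> sets M" "\<And>i. L1_approximable M (indicator (A i))"
  shows "L1_approximable M (indicator (\<Union>i. A i))"
proof -
  define B where "B n = (\<Union>i<n. A i)" for n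
  have BM: "B n \<in> sets M" for n unfolding B_def using A(2) by auto
  have UM: "(\<Union>i. A i) \<in> sets M" using A(2) by auto
  have approx_B: "L1_approximable M (indicator (B n))" for n
  proof (induction n)
    case 0
    then show ?case using L1_approximable_zero by (simp add: B_def)
  next
    case (Suc n)
    have "B (Suc n) = B n \<union> A n" by (auto simp: B_def lessThan_Suc)
    moreover have "B n \<inter> A n = {}"
      using A(1) by (auto simp: B_def disjoint_family_on_def) (metis IntI empty_iff less_irrefl_nat)
    ultimately have "indicator (B (Suc n)) = (\<lambda>x. indicator (B n) x + indicator (A n) x :: complex)"
      by (auto simp: indicator_def fun_eq_iff)
    then show ?case
      using L1_approximable_add[OF integrable_indicator[OF BM] Suc integrable_indicator[OF A(2)] A(3)]
      by simp
  qed
  show ?thesis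
  proof (rule L1_approximable_limit[OF integrable_indicator[OF UM]])
    fix e :: real assume e: "e > 0"
    have "incseq B" unfolding B_def by (intro incseq_SucI) (auto simp: lessThan_Suc)
    then have "(\<lambda>n. measure M (B n)) \<longlonglongrightarrow> measure M (\<Union>n. B n)"
      by (intro finite_measure.finite_Lim_measure_incseq[OF finite]) (use BM in auto)
    moreover have "(\<Union>n. B n) = (\<Union>i. A i)" unfolding B_def by auto
    ultimately have "(\<lambda>n. measure M (B n)) \<longlonglongrightarrow> measure M (\<Union>i. A i)" by simp
    then obtain n where n: "measure M (\<Union>i. A i) - e < measure M (B n)"
      by (rule LIMSEQ_obtain_greater[where a="measure M (\<Union>i. A i) - e"]) (use e in simp)
    have sub: "B n \<subseteq> (\<Union>i. A i)" unfolding B_def by auto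
    have "(\<integral>x. cmod (indicator (\<Union>i. A i) x - indicator (B n) x) \<partial>M) = (\<integral>x. indicator ((\<Union>i. A i) - B n) x \<partial>M)"
      by (rule Bochner_Integration.integral_cong) (use sub in \<open>auto simp: indicator_def\<close>)
    also have "\<dots> = measure M (\<Union>i. A i) - measure M (B n)"
      using finite_measure.finite_measure_Diff[OF finite UM BM sub] space_eq by simp
    finally show "\<exists>g. integrable M g \<and> L1_approximable M g \<and> (\<integral>x. cmod (indicator (\<Union>i. A i) x - g x) \<partial>M) < e"
      using n integrable_indicator[OF BM] approx_B by (intro exI[of _ "indicator (B n)"]) auto
  qed
qed

lemma L1_approximable_indicator:
  assumes "A \<in> sets M"
  shows "L1_approximable M (indicator A)"
proof -
  have generated: "A \<in> sigma_sets UNIV {S. open S}" using assms by (metis sets_eq sets_borel)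
  have "Int_stable {S::'x set. open S}" unfolding Int_stable_def by (simp add: open_Int)
  moreover have "{S::'x set. open S} \<subseteq> Pow UNIV" by simp
  ultimately show ?thesis using generated
  proof (induction rule: sigma_sets_induct_disjoint)
    case (union A)
    then have "A i \<in> sets M" for i by (metis sets_eq sets_borel range_subsetD)
    with union show ?case by (intro L1_approximable_indicator_UNION)
  next
    case empty
    have "indicator {} = (\<lambda>x::'x. 0::complex)" by auto
    then show ?case using L1_approximable_zero by simp
  next
    case (basic A)
    then show ?case by (simp add: L1_approximable_indicator_open)
  next
    case (compl A)
    then show ?case by (intro L1_approximable_indicator_compl) simp
  qed
qed

lemma L1_approximable_integrable:
  assumes "integrable M f"
  shows "L1_approximable M f"
  using assms
proof (induction rule: integrable_induct)
  case (base A c)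
  have "(\<lambda>x. indicator A x *\<^sub>R c) = (\<lambda>x. indicator A x * c)"
    by (auto simp: indicator_def)
  then show ?case using L1_approximable_mult[OF L1_approximable_indicator[OF base(1)]] by simp
next
  case (add f g)
  then show ?case by (intro L1_approximable_add)
next
  case (lim f s)
  show ?case
  proof (rule L1_approximable_limit[OF lim(4)])
    fix e :: real assume e: "e > 0"
    have "(\<lambda>i. \<integral>x. cmod (f x - s i x) \<partial>M) \<longlonglongrightarrow> (\<integral>x. 0 \<partial>M)"
    proof (rule integral_dominated_convergence[where w="\<lambda>x. 3 * cmod (f x)"])
      show "(\<lambda>x. cmod (f x - s i x)) \<in> borel_measurable M" for i
        using lim(1)[of i] lim(4)
        by (intro borel_measurable_integrable integrable_norm Bochner_Integration.integrable_diff)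
      show "integrable M (\<lambda>x. 3 * cmod (f x))" using lim(4) by auto
      show "AE x in M. (\<lambda>i. cmod (f x - s i x)) \<longlonglongrightarrow> 0"
      proof (intro AE_I2)
        fix x assume "x \<in> space M"
        then have "(\<lambda>i. f x - s i x) \<longlonglongrightarrow> f x - f x" by (intro tendsto_diff tendsto_const lim(2))
        then show "(\<lambda>i. cmod (f x - s i x)) \<longlonglongrightarrow> 0" using tendsto_norm_zero by force
      qed
      show "AE x in M. norm (cmod (f x - s i x)) \<le> 3 * cmod (f x)" for i
      proof (intro AE_I2)
        fix x assume "x \<in> space M"
        then show "norm (cmod (f x - s i x)) \<le> 3 * cmod (f x)"
          using lim(3)[of x i] norm_triangle_ineq4[of "f x" "s i x"] by simp
      qed
    qed simp
    then obtain i where "(\<integral>x. cmod (f x - s i x) \<partial>M) < e"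
      by (rule LIMSEQ_obtain_less[where a=e]) (use e in simp)
    then show "\<exists>g. integrable M g \<and> L1_approximable M g \<and> (\<integral>x. cmod (f x - g x) \<partial>M) < e"
      using lim(1,5) by blast
  qed
qed

end

section \<open>Square-integrable functions\<close>

lemma cmod_diff_power2_le:
  "(cmod (a - c))\<^sup>2 \<le> 2 * (cmod (a - b))\<^sup>2 + 2 * (cmod (b - c))\<^sup>2"
proof -
  have "cmod (a - c) \<le> cmod (a - b) + cmod (b - c)" by (rule norm_diff_triangle_le[where y=b]) simp_all
  then have "(cmod (a - c))\<^sup>2 \<le> (cmod (a - b) + cmod (b - c))\<^sup>2" by (rule power_mono) simp
  also have "\<dots> \<le> 2 * (cmod (a - b))\<^sup>2 + 2 * (cmod (b - c))\<^sup>2"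
    using sum_squares_bound[of "cmod (a - b)" "cmod (b - c)"] by (simp add: power2_eq_square algebra_simps)
  finally show ?thesis .
qed

lemma cmod_diff_power2_le3:
  "(cmod (a - d))\<^sup>2 \<le> 3 * ((cmod (a - b))\<^sup>2 + (cmod (b - c))\<^sup>2 + (cmod (c - d))\<^sup>2)"
proof -
  have "cmod (a - d) \<le> cmod (a - b) + cmod (b - c) + cmod (c - d)"
    by (intro norm_diff_triangle_le[where y=c] norm_diff_triangle_le[where y=b]) simp_all
  then have "(cmod (a - d))\<^sup>2 \<le> (cmod (a - b) + cmod (b - c) + cmod (c - d))\<^sup>2" by (rule power_mono) simp
  also have "\<dots> \<le> 3 * ((cmod (a - b))\<^sup>2 + (cmod (b - c))\<^sup>2 + (cmod (c - d))\<^sup>2)"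
  proof -
    have "(x + y + z)\<^sup>2 \<le> 3 * (x\<^sup>2 + y\<^sup>2 + z\<^sup>2)" for x y z :: real
    proof -
      have "0 \<le> (x - y)\<^sup>2 + (y - z)\<^sup>2 + (x - z)\<^sup>2" by simp
      then show ?thesis by (simp add: power2_eq_square algebra_simps)
    qed
    then show ?thesis .
  qed
  finally show ?thesis .
qed

lemma integrable_cmod_diff_power2:
  fixes f g :: "'a \<Rightarrow> complex"
  assumes "f \<in> borel_measurable M" "integrable M (\<lambda>x. (cmod (f x))\<^sup>2)"
    and "g \<in> borel_measurable M" "integrable M (\<lambda>x. (cmod (g x))\<^sup>2)"
  shows "integrable M (\<lambda>x. (cmod (f x - g x))\<^sup>2)"
proof (rule Bochner_Integration.integrable_bound[of M "\<lambda>x. 2 * (cmod (f x))\<^sup>2 + 2 * (cmod (g x))\<^sup>2"])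
  show "integrable M (\<lambda>x. 2 * (cmod (f x))\<^sup>2 + 2 * (cmod (g x))\<^sup>2)" using assms(2,4) by auto
  show "(\<lambda>x. (cmod (f x - g x))\<^sup>2) \<in> borel_measurable M" using assms(1,3) by measurable
  show "AE x in M. norm ((cmod (f x - g x))\<^sup>2) \<le> norm (2 * (cmod (f x))\<^sup>2 + 2 * (cmod (g x))\<^sup>2)"
  proof (intro AE_I2)
    fix x
    show "norm ((cmod (f x - g x))\<^sup>2) \<le> norm (2 * (cmod (f x))\<^sup>2 + 2 * (cmod (g x))\<^sup>2)"
      using cmod_diff_power2_le[where a="f x" and b=0 and c="g x"] by simp
  qed
qed

lemma integrable_if_square_integrable:
  fixes f :: "'a \<Rightarrow> complex"
  assumes "finite_measure M" "f \<in> borel_measurable M" "integrable M (\<lambda>x. (cmod (f x))\<^sup>2)"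
  shows "integrable M f"
proof (rule Bochner_Integration.integrable_bound[of M "\<lambda>x. 1 + (cmod (f x))\<^sup>2"])
  show "integrable M (\<lambda>x. 1 + (cmod (f x))\<^sup>2)"
    using assms finite_measure.integrable_const[OF assms(1)] by (intro Bochner_Integration.integrable_add) auto
  show "AE x in M. norm (f x) \<le> norm (1 + (cmod (f x))\<^sup>2)"
  proof (intro AE_I2)
    fix x
    have "cmod (f x) \<le> 1 + (cmod (f x))\<^sup>2"
      using sum_squares_bound[of "cmod (f x)" 1] norm_ge_zero[of "f x"] unfolding power2_eq_square by linarith
    then show "norm (f x) \<le> norm (1 + (cmod (f x))\<^sup>2)" by simp
  qed
qed fact

lemma integral_cmod_diff_const_power2:
  fixes f :: "'a \<Rightarrow> complex"
  assumes P: "prob_space P" and "f \<in> borel_measurable P" and f2: "integrable P (\<lambda>x. (cmod (f x))\<^sup>2)"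
  shows "(\<integral>x. (cmod (f x - c))\<^sup>2 \<partial>P) = (\<integral>x. (cmod (f x))\<^sup>2 \<partial>P) - 2 * Re (cnj c * (\<integral>x. f x \<partial>P)) + (cmod c)\<^sup>2"
proof -
  interpret prob_space P by (rule P)
  have f: "integrable P f" using integrable_if_square_integrable[OF finite_measure assms(2) f2] .
  have i: "integrable P (\<lambda>x. 2 * Re (cnj c * f x))" using f by auto
  have "(cmod (z - c))\<^sup>2 = (cmod z)\<^sup>2 - 2 * Re (cnj c * z) + (cmod c)\<^sup>2" for z
    unfolding cmod_power2 by (simp add: power2_eq_square algebra_simps)
  then have "(\<integral>x. (cmod (f x - c))\<^sup>2 \<partial>P) = (\<integral>x. (cmod (f x))\<^sup>2 - 2 * Re (cnj c * f x) + (cmod c)\<^sup>2 \<partial>P)"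
    by presburger
  also have "\<dots> = (\<integral>x. (cmod (f x))\<^sup>2 - 2 * Re (cnj c * f x) \<partial>P) + (\<integral>x. (cmod c)\<^sup>2 \<partial>P)"
    using f2 i by (intro Bochner_Integration.integral_add) auto
  also have "(\<integral>x. (cmod (f x))\<^sup>2 - 2 * Re (cnj c * f x) \<partial>P) = (\<integral>x. (cmod (f x))\<^sup>2 \<partial>P) - (\<integral>x. 2 * Re (cnj c * f x) \<partial>P)"
    using f2 i by (rule Bochner_Integration.integral_diff)
  also have "(\<integral>x. 2 * Re (cnj c * f x) \<partial>P) = 2 * Re (\<integral>x. cnj c * f x \<partial>P)"
    using f by (subst integral_Re[symmetric]) auto
  also have "(\<integral>x. cnj c * f x \<partial>P) = cnj c * (\<integral>x. f x \<partial>P)" by (rule integral_mult_right_zero)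
  also have "(\<integral>x. (cmod c)\<^sup>2 \<partial>P) = (cmod c)\<^sup>2" using prob_space by simp
  finally show ?thesis .
qed

definition centered :: "'x measure \<Rightarrow> ('x \<Rightarrow> complex) \<Rightarrow> 'x \<Rightarrow> complex" where
  "centered M h = (\<lambda>x. h x - (LINT y|M. h y))"

lemma L2_norm_sq_centered:
  fixes h :: "'a \<Rightarrow> complex"
  assumes "prob_space M" "h \<in> borel_measurable M" "integrable M (\<lambda>x. (cmod (h x))\<^sup>2)"
  shows "L2_norm_sq M (centered M h) = (LINT x|M. (cmod (h x))\<^sup>2) - (cmod (LINT x|M. h x))\<^sup>2"
proof -
  define m where "m = (LINT x|M. h x)"
  have "Re (cnj m * m) = (cmod m)\<^sup>2" unfolding cmod_power2 by (simp add: power2_eq_square)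
  moreover have "L2_norm_sq M (centered M h) = (LINT x|M. (cmod (h x))\<^sup>2) - 2 * Re (cnj m * m) + (cmod m)\<^sup>2"
    unfolding L2_norm_sq_def centered_def m_def[symmetric]
    by (rule integral_cmod_diff_const_power2[OF assms, of m, folded m_def])
  ultimately show ?thesis unfolding m_def[symmetric] by linarith
qed

definition disc_retraction :: "real \<Rightarrow> complex \<Rightarrow> complex" where
  "disc_retraction r = closest_point (cball 0 r)"

lemma
  assumes "0 \<le> r"
  shows continuous_on_disc_retraction: "continuous_on UNIV (disc_retraction r)"
    and norm_disc_retraction_le: "cmod (disc_retraction r z) \<le> r"
    and disc_retraction_lipschitz: "cmod (disc_retraction r z - disc_retraction r w) \<le> cmod (z - w)"
    and norm_diff_disc_retraction_le: "cmod (z - disc_retraction r z) \<le> cmod z"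
proof -
  have ne: "cball (0::complex) r \<noteq> {}" using assms by simp
  show "continuous_on UNIV (disc_retraction r)"
    unfolding disc_retraction_def by (rule continuous_on_closest_point[OF convex_cball closed_cball ne])
  show "cmod (disc_retraction r z) \<le> r"
    using closest_point_in_set[OF closed_cball ne, of z] unfolding disc_retraction_def by simp
  show "cmod (disc_retraction r z - disc_retraction r w) \<le> cmod (z - w)"
    using closest_point_lipschitz[OF convex_cball closed_cball ne, of z w]
    unfolding disc_retraction_def by (simp add: dist_norm)
  have "0 \<in> cball (0::complex) r" using assms by simp
  from closest_point_le[OF closed_cball this, of z]
  show "cmod (z - disc_retraction r z) \<le> cmod z" unfolding disc_retraction_def by (simp add: dist_norm)
qed

lemma disc_retraction_eq_self: "cmod z \<le> r \<Longrightarrow> disc_retraction r z = z"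
  unfolding disc_retraction_def by (rule closest_point_self) simp

context compact_finite_borel
begin

text \<open>An \<open>L\<^sup>1\<close>-approximation of \<open>g\<close> by a continuous function, retracted onto the disc of radius
  \<open>r\<close> containing the values of \<open>g\<close>, is an \<open>L\<^sup>2\<close>-approximation since \<open>|a - b|\<^sup>2 \<le> 2r|a - b|\<close> there.\<close>

lemma L2_approx_continuous_bounded:
  fixes g :: "'x \<Rightarrow> complex"
  assumes g: "g \<in> borel_measurable M" and bounded: "\<And>x. cmod (g x) \<le> r" and e: "e > 0"
  obtains h where "continuous_on UNIV h" "(\<integral>x. (cmod (g x - h x))\<^sup>2 \<partial>M) < e"
proof -
  have r: "0 \<le> r" using bounded[of undefined] norm_ge_zero order_trans by blast
  have g1: "integrable M g" using finite_measure.integrable_const_bound[OF finite AE_I2[OF bounded] g] .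
  have "e / (2 * r + 1) > 0" using e r by simp
  then obtain h0 where h0: "continuous_on UNIV h0" "(\<integral>x. cmod (g x - h0 x) \<partial>M) < e / (2 * r + 1)"
    using L1_approximable_integrable[OF g1] unfolding L1_approximable_def by blast
  define h where "h x = disc_retraction r (h0 x)" for x
  have hc: "continuous_on UNIV h"
    unfolding h_def using continuous_on_compose2[OF continuous_on_disc_retraction[OF r] h0(1)] by simp
  have pointwise: "(cmod (g x - h x))\<^sup>2 \<le> 2 * r * cmod (g x - h0 x)" for x
  proof -
    have "cmod (g x - h x) \<le> 2 * r"
      using norm_triangle_ineq4[of "g x" "h x"] bounded[of x] norm_disc_retraction_le[OF r, of "h0 x"]
      unfolding h_def by linarith
    then have "(cmod (g x - h x))\<^sup>2 \<le> 2 * r * cmod (g x - h x)"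
      by (simp add: power2_eq_square mult_right_mono)
    also have "\<dots> \<le> 2 * r * cmod (g x - h0 x)"
      using disc_retraction_lipschitz[OF r, of "g x" "h0 x"] disc_retraction_eq_self[OF bounded[of x]] r
      unfolding h_def by (simp add: mult_left_mono)
    finally show ?thesis .
  qed
  have "norm ((cmod (g x))\<^sup>2) \<le> r\<^sup>2" for x using power_mono[OF bounded norm_ge_zero] by simp
  moreover have "(\<lambda>x. (cmod (g x))\<^sup>2) \<in> borel_measurable M" using g by measurable
  ultimately have g2: "integrable M (\<lambda>x. (cmod (g x))\<^sup>2)"
    by (intro finite_measure.integrable_const_bound[OF finite AE_I2])
  have h2: "integrable M (\<lambda>x. (cmod (h x))\<^sup>2)"
    by (rule integrable_continuous) (use hc in \<open>intro continuous_intros\<close>)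
  have "integrable M (\<lambda>x. (cmod (g x - h x))\<^sup>2)"
    using integrable_cmod_diff_power2[OF g g2 borel_measurable_continuous_on_sets_borel[OF sets_eq hc] h2] .
  then have "(\<integral>x. (cmod (g x - h x))\<^sup>2 \<partial>M) \<le> (\<integral>x. 2 * r * cmod (g x - h0 x) \<partial>M)"
    by (rule integral_mono) (use g1 integrable_continuous[OF h0(1)] pointwise in auto)
  also have "\<dots> = 2 * r * (\<integral>x. cmod (g x - h0 x) \<partial>M)" by simp
  also have "\<dots> \<le> 2 * r * (e / (2 * r + 1))" using h0(2) r by (intro mult_left_mono) auto
  also have "\<dots> < e" using e r by (simp add: field_simps)
  finally show ?thesis using hc that by blast
qed

lemma L2_approx_continuous:
  fixes f :: "'x \<Rightarrow> complex"
  assumes f: "f \<in> borel_measurable M" "integrable M (\<lambda>x. (cmod (f x))\<^sup>2)" and e: "e > 0"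
  obtains h where "continuous_on UNIV h" "(\<integral>x. (cmod (f x - h x))\<^sup>2 \<partial>M) < e"
proof -
  define g where "g k x = disc_retraction (real k) (f x)" for k x
  have g: "g k \<in> borel_measurable M" for k
    using measurable_compose[OF f(1) borel_measurable_continuous_onI[OF continuous_on_disc_retraction]]
    unfolding g_def comp_def by simp
  have g_bounded: "cmod (g k x) \<le> real k" for k x
    unfolding g_def by (rule norm_disc_retraction_le) simp
  have "(\<lambda>k. \<integral>x. (cmod (f x - g k x))\<^sup>2 \<partial>M) \<longlonglongrightarrow> (\<integral>x. 0 \<partial>M)"
  proof (rule integral_dominated_convergence[where w="\<lambda>x. (cmod (f x))\<^sup>2"])
    show "(\<lambda>x. (cmod (f x - g k x))\<^sup>2) \<in> borel_measurable M" for k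
      using f(1) g[of k] by measurable
    show "AE x in M. (\<lambda>k. (cmod (f x - g k x))\<^sup>2) \<longlonglongrightarrow> 0"
    proof (intro AE_I2)
      fix x
      obtain N where "cmod (f x) \<le> real N" using real_arch_simple by blast
      then have "eventually (\<lambda>k. (cmod (f x - g k x))\<^sup>2 = 0) sequentially"
        unfolding eventually_sequentially g_def
        by (metis disc_retraction_eq_self diff_self norm_zero order_trans of_nat_mono zero_power2)
      then show "(\<lambda>k. (cmod (f x - g k x))\<^sup>2) \<longlonglongrightarrow> 0" by (rule tendsto_eventually)
    qed
    show "AE x in M. norm ((cmod (f x - g k x))\<^sup>2) \<le> (cmod (f x))\<^sup>2" for k
      using norm_diff_disc_retraction_le[of "real k"] unfolding g_def by (intro AE_I2) (simp add: power_mono)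
  qed (use f(2) in simp_all)
  then obtain k where k: "(\<integral>x. (cmod (f x - g k x))\<^sup>2 \<partial>M) < e/4"
    by (rule LIMSEQ_obtain_less[where a="e/4"]) (use e in simp)
  have "e/4 > 0" using e by simp
  then obtain h where h: "continuous_on UNIV h" "(\<integral>x. (cmod (g k x - h x))\<^sup>2 \<partial>M) < e/4"
    by (rule L2_approx_continuous_bounded[OF g g_bounded])
  have "norm ((cmod (g k x))\<^sup>2) \<le> (real k)\<^sup>2" for x using power_mono[OF g_bounded norm_ge_zero] by simp
  moreover have "(\<lambda>x. (cmod (g k x))\<^sup>2) \<in> borel_measurable M" using g by measurable
  ultimately have g2: "integrable M (\<lambda>x. (cmod (g k x))\<^sup>2)"
    by (intro finite_measure.integrable_const_bound[OF finite AE_I2])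
  have h2: "integrable M (\<lambda>x. (cmod (h x))\<^sup>2)"
    by (rule integrable_continuous) (use h(1) in \<open>intro continuous_intros\<close>)
  note hm = borel_measurable_continuous_on_sets_borel[OF sets_eq h(1)]
  have fg: "integrable M (\<lambda>x. (cmod (f x - g k x))\<^sup>2)" by (rule integrable_cmod_diff_power2[OF f g g2])
  have gh: "integrable M (\<lambda>x. (cmod (g k x - h x))\<^sup>2)" by (rule integrable_cmod_diff_power2[OF g g2 hm h2])
  have "integrable M (\<lambda>x. (cmod (f x - h x))\<^sup>2)" by (rule integrable_cmod_diff_power2[OF f hm h2])
  then have "(\<integral>x. (cmod (f x - h x))\<^sup>2 \<partial>M)
      \<le> (\<integral>x. 2 * (cmod (f x - g k x))\<^sup>2 + 2 * (cmod (g k x - h x))\<^sup>2 \<partial>M)"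
    by (rule integral_mono) (use fg gh cmod_diff_power2_le in auto)
  also have "\<dots> = 2 * (\<integral>x. (cmod (f x - g k x))\<^sup>2 \<partial>M) + 2 * (\<integral>x. (cmod (g k x - h x))\<^sup>2 \<partial>M)"
    using fg gh by simp
  also have "\<dots> < e" using k h(2) by simp
  finally show ?thesis using h(1) that by blast
qed

end

section \<open>Invariant measures of a continuous action\<close>

lemma continuous_action_continuous_on:
  assumes "continuous_action act"
  shows "continuous_on UNIV (act g)"
proof -
  have "continuous_on UNIV (\<lambda>p. act (fst p) (snd p))"
    using assms unfolding continuous_action_def by (simp add: case_prod_beta')
  then have "continuous_on UNIV (\<lambda>x. act (fst (g, x)) (snd (g, x)))"
    by (rule continuous_on_compose2) (auto intro: continuous_intros)
  then show ?thesis by simp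
qed

lemma continuous_on_koopman_displacement:
  fixes act :: "'g::topological_group_add \<Rightarrow> 'x::topological_space \<Rightarrow> 'x" and h :: "'x \<Rightarrow> complex"
  assumes "continuous_action act" "continuous_on UNIV h"
  shows "continuous_on UNIV (\<lambda>p. (cmod (koopman act (fst p) h (snd p) - h (snd p)))\<^sup>2)"
proof -
  have "continuous_on UNIV (\<lambda>p. act (fst p) (snd p))"
    using assms(1) unfolding continuous_action_def by (simp add: case_prod_beta')
  then have "continuous_on UNIV (\<lambda>p::'g \<times> 'x. act (fst (- fst p, snd p)) (snd (- fst p, snd p)))"
    by (rule continuous_on_compose2)
       (auto intro!: continuous_on_Pair continuous_on_minus continuous_on_fst continuous_on_snd continuous_on_id)
  then have "continuous_on UNIV (\<lambda>p::'g \<times> 'x. h (act (- fst p) (snd p)))"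
    using continuous_on_compose2[OF assms(2)] by simp
  moreover have "continuous_on UNIV (\<lambda>p::'g \<times> 'x. h (snd p))"
    by (rule continuous_on_compose2[OF assms(2)]) (auto intro: continuous_intros)
  ultimately show ?thesis unfolding koopman_def by (intro continuous_intros)
qed

lemma distr_eq_if_invariant_measure:
  assumes "borel_prob M" "invariant_measure act M" "continuous_action act"
  shows "distr M borel (act g) = M"
proof (rule measure_eqI)
  have sets_eq: "sets M = sets borel" using assms(1) unfolding borel_prob_def by simp
  then show "sets (distr M borel (act g)) = sets M" by simp
  fix A assume "A \<in> sets (distr M borel (act g))"
  then have A: "A \<in> sets borel" by simp
  have "act g \<in> measurable M borel"
    using borel_measurable_continuous_on_sets_borel[OF sets_eq continuous_action_continuous_on[OF assms(3)]] .
  then have "emeasure (distr M borel (act g)) A = emeasure M (act g -` A \<inter> space M)"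
    using A by (rule emeasure_distr)
  also have "\<dots> = emeasure M A" using assms(2) A sets_eq unfolding invariant_measure_def by simp
  finally show "emeasure (distr M borel (act g)) A = emeasure M A" .
qed

lemma invariant_measure_if_distr_eq:
  assumes "sets M = sets borel" "continuous_action act" "\<And>g. distr M borel (act g) = M"
  shows "invariant_measure act M"
  unfolding invariant_measure_def
proof (intro allI ballI)
  fix g A assume "A \<in> sets M"
  moreover have "act g \<in> measurable M borel"
    using borel_measurable_continuous_on_sets_borel[OF assms(1) continuous_action_continuous_on[OF assms(2)]] .
  ultimately show "emeasure M (act g -` A \<inter> space M) = emeasure M A"
    using emeasure_distr[of "act g" M borel A] assms(1,3) by simp
qed

lemma
  fixes \<phi> :: "'x::topological_space \<Rightarrow> real"
  assumes M: "borel_prob M" "invariant_measure act M" "continuous_action act"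
    and \<phi>: "\<phi> \<in> borel_measurable M" "integrable M \<phi>"
  shows integrable_compose_invariant: "integrable M (\<lambda>x. \<phi> (act g x))"
    and integral_compose_invariant: "(\<integral>x. \<phi> (act g x) \<partial>M) = (\<integral>x. \<phi> x \<partial>M)"
proof -
  have sets_eq: "sets M = sets borel" using M(1) unfolding borel_prob_def by simp
  have T: "act g \<in> measurable M borel"
    using borel_measurable_continuous_on_sets_borel[OF sets_eq continuous_action_continuous_on[OF M(3)]] .
  have \<phi>b: "\<phi> \<in> borel_measurable borel" using \<phi>(1) unfolding measurable_cong_sets[OF sets_eq refl] .
  note distr = distr_eq_if_invariant_measure[OF M, of g]
  show "integrable M (\<lambda>x. \<phi> (act g x))"
    using integrable_distr_eq[OF T \<phi>b] distr \<phi>(2) by simp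
  show "(\<integral>x. \<phi> (act g x) \<partial>M) = (\<integral>x. \<phi> x \<partial>M)"
    using integral_distr[OF T \<phi>b] distr by simp
qed

text \<open>Invariance turns \<open>\<integral>|h(-g\<cdot>x) - f(-g\<cdot>x)|\<^sup>2\<close> into \<open>\<integral>|h - f|\<^sup>2\<close>.\<close>

lemma L2_norm_sq_koopman_displacement_le:
  fixes f h :: "'x::topological_space \<Rightarrow> complex"
  assumes M: "borel_prob M" "invariant_measure act M" "continuous_action act"
    and f: "f \<in> borel_measurable M" "integrable M (\<lambda>x. (cmod (f x))\<^sup>2)"
    and h: "h \<in> borel_measurable M" "integrable M (\<lambda>x. (cmod (h x))\<^sup>2)"
  shows "L2_norm_sq M (\<lambda>x. koopman act g h x - h x)
    \<le> 6 * L2_norm_sq M (\<lambda>x. f x - h x) + 3 * L2_norm_sq M (\<lambda>x. koopman act g f x - f x)"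
proof -
  have sets_eq: "sets M = sets borel" using M(1) unfolding borel_prob_def by simp
  have T: "act (- g) \<in> measurable M M"
    using borel_measurable_continuous_on_sets_borel[OF sets_eq continuous_action_continuous_on[OF M(3)]]
    by (simp add: measurable_cong_sets[OF refl sets_eq])
  have fT: "(\<lambda>x. f (act (- g) x)) \<in> borel_measurable M" and hT: "(\<lambda>x. h (act (- g) x)) \<in> borel_measurable M"
    using measurable_compose[OF T f(1)] measurable_compose[OF T h(1)] by (simp_all add: comp_def)
  have hf: "integrable M (\<lambda>x. (cmod (h x - f x))\<^sup>2)" using integrable_cmod_diff_power2[OF h f] .
  have hf_m: "(\<lambda>x. (cmod (h x - f x))\<^sup>2) \<in> borel_measurable M" using h(1) f(1) by measurable
  have f2_m: "(\<lambda>x. (cmod (f x))\<^sup>2) \<in> borel_measurable M" using f(1) by measurable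
  have hfT: "integrable M (\<lambda>x. (cmod (h (act (- g) x) - f (act (- g) x)))\<^sup>2)"
    and hfT_eq: "(\<integral>x. (cmod (h (act (- g) x) - f (act (- g) x)))\<^sup>2 \<partial>M) = (\<integral>x. (cmod (h x - f x))\<^sup>2 \<partial>M)"
    using integrable_compose_invariant[OF M hf_m hf] integral_compose_invariant[OF M hf_m hf] by auto
  have fTf: "integrable M (\<lambda>x. (cmod (f (act (- g) x) - f x))\<^sup>2)"
    using integrable_cmod_diff_power2[OF fT integrable_compose_invariant[OF M f2_m f(2)] f] .
  have h2_m: "(\<lambda>x. (cmod (h x))\<^sup>2) \<in> borel_measurable M" using h(1) by measurable
  have hTh: "integrable M (\<lambda>x. (cmod (h (act (- g) x) - h x))\<^sup>2)"
    using integrable_cmod_diff_power2[OF hT integrable_compose_invariant[OF M h2_m h(2)] h] .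
  have fh: "integrable M (\<lambda>x. (cmod (f x - h x))\<^sup>2)" using integrable_cmod_diff_power2[OF f h] .
  have "(\<integral>x. (cmod (h (act (- g) x) - h x))\<^sup>2 \<partial>M) \<le>
      (\<integral>x. 3 * ((cmod (h (act (- g) x) - f (act (- g) x)))\<^sup>2 + (cmod (f (act (- g) x) - f x))\<^sup>2
        + (cmod (f x - h x))\<^sup>2) \<partial>M)"
    by (rule integral_mono[OF hTh]) (use hfT fTf fh cmod_diff_power2_le3 in auto)
  also have "\<dots> = 3 * ((\<integral>x. (cmod (h x - f x))\<^sup>2 \<partial>M) + (\<integral>x. (cmod (f (act (- g) x) - f x))\<^sup>2 \<partial>M)
      + (\<integral>x. (cmod (f x - h x))\<^sup>2 \<partial>M))"
    using hfT fTf fh hfT_eq by simp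
  also have "\<dots> = 6 * (\<integral>x. (cmod (f x - h x))\<^sup>2 \<partial>M) + 3 * (\<integral>x. (cmod (f (act (- g) x) - f x))\<^sup>2 \<partial>M)"
    by (simp add: norm_minus_commute)
  finally show ?thesis
    unfolding L2_norm_sq_def koopman_def .
qed

section \<open>Weak-* limits\<close>

lemma weak_star_tendsto_integral_complex:
  fixes h :: "'x::metric_space \<Rightarrow> complex"
  assumes "compact (UNIV::'x set)" "\<And>n. borel_prob (\<mu>s n)" "borel_prob \<mu>"
    "weak_star_converges \<mu>s \<mu>" "continuous_on UNIV h"
  shows "(\<lambda>n. \<integral>x. h x \<partial>\<mu>s n) \<longlonglongrightarrow> (\<integral>x. h x \<partial>\<mu>)"
proof -
  have "integrable M h" if "borel_prob M" for M
    using integrable_continuous_on_compact_UNIV[OF assms(1) _ _ assms(5)] that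
    unfolding borel_prob_def by (auto intro: prob_space.finite_measure)
  moreover have "(\<lambda>n. \<integral>x. Re (h x) \<partial>\<mu>s n) \<longlonglongrightarrow> (\<integral>x. Re (h x) \<partial>\<mu>)"
    and "(\<lambda>n. \<integral>x. Im (h x) \<partial>\<mu>s n) \<longlonglongrightarrow> (\<integral>x. Im (h x) \<partial>\<mu>)"
    using assms(4,5) unfolding weak_star_converges_def by (auto intro: continuous_intros)
  ultimately show ?thesis using assms(2,3) by (simp add: tendsto_complex_iff)
qed

lemma weak_star_limit_invariant:
  fixes act :: "'g::{group_add,topological_space} \<Rightarrow> 'x::metric_space \<Rightarrow> 'x"
  assumes "continuous_action act" "\<And>n. borel_prob (\<mu>s n)"
    "\<And>n. invariant_measure act (\<mu>s n)" "borel_prob \<mu>" "weak_star_converges \<mu>s \<mu>"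
  shows "invariant_measure act \<mu>"
proof -
  have sets_eq: "sets \<mu> = sets borel" and prob: "prob_space \<mu>"
    using assms(4) unfolding borel_prob_def by auto
  have T: "act g \<in> measurable N borel" if "sets N = sets borel" for g and N :: "'x measure"
    using borel_measurable_continuous_on_sets_borel[OF that continuous_action_continuous_on[OF assms(1)]] .
  have "distr \<mu> borel (act g) = \<mu>" for g
  proof (rule finite_measure_eq_if_integral_continuous_eq)
    show "finite_measure (distr \<mu> borel (act g))"
      using prob_space.prob_space_distr[OF prob T[OF sets_eq]] by (rule prob_space.finite_measure)
    show "finite_measure \<mu>" using prob by (rule prob_space.finite_measure)
    fix \<phi> :: "'x \<Rightarrow> real" assume \<phi>: "continuous_on UNIV \<phi>"
    have \<phi>_m: "\<phi> \<in> borel_measurable borel" using borel_measurable_continuous_onI[OF \<phi>] .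
    have "(\<integral>x. \<phi> (act g x) \<partial>\<mu>s n) = (\<integral>x. \<phi> x \<partial>\<mu>s n)" for n
      using assms(2) integral_distr[OF T \<phi>_m, of "\<mu>s n" g]
        distr_eq_if_invariant_measure[OF assms(2,3,1)] unfolding borel_prob_def by simp
    moreover have "(\<lambda>n. \<integral>x. \<phi> (act g x) \<partial>\<mu>s n) \<longlonglongrightarrow> (\<integral>x. \<phi> (act g x) \<partial>\<mu>)"
      using assms(5) continuous_on_compose2[OF \<phi> continuous_action_continuous_on[OF assms(1)]]
      unfolding weak_star_converges_def by simp
    ultimately have "(\<integral>x. \<phi> (act g x) \<partial>\<mu>) = (\<integral>x. \<phi> x \<partial>\<mu>)"
      using assms(5) \<phi> LIMSEQ_unique unfolding weak_star_converges_def by fastforce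
    then show "(\<integral>x. \<phi> x \<partial>distr \<mu> borel (act g)) = (\<integral>x. \<phi> x \<partial>\<mu>)"
      using integral_distr[OF T[OF sets_eq] \<phi>_m] by simp
  qed (use sets_eq in simp_all)
  then show ?thesis by (rule invariant_measure_if_distr_eq[OF sets_eq assms(1)])
qed

lemma weak_star_tendsto_L2_norm_sq_centered:
  fixes h :: "'x::metric_space \<Rightarrow> complex"
  assumes "compact (UNIV::'x set)" "\<And>n. borel_prob (\<mu>s n)" "borel_prob \<mu>"
    "weak_star_converges \<mu>s \<mu>" "continuous_on UNIV h"
  shows "(\<lambda>n. L2_norm_sq (\<mu>s n) (centered (\<mu>s n) h)) \<longlonglongrightarrow> L2_norm_sq \<mu> (centered \<mu> h)"
proof -
  have h2: "continuous_on UNIV (\<lambda>x. (cmod (h x))\<^sup>2)" using assms(5) by (intro continuous_intros)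
  have variance: "L2_norm_sq M (centered M h) = (\<integral>x. (cmod (h x))\<^sup>2 \<partial>M) - (cmod (\<integral>x. h x \<partial>M))\<^sup>2"
    if "borel_prob M" for M
  proof -
    have prob: "prob_space M" and sets_eq: "sets M = sets borel" using that unfolding borel_prob_def by auto
    show ?thesis
      using L2_norm_sq_centered[OF prob borel_measurable_continuous_on_sets_borel[OF sets_eq assms(5)]
          integrable_continuous_on_compact_UNIV[OF assms(1) prob_space.finite_measure[OF prob] sets_eq h2]] .
  qed
  have "(\<lambda>n. \<integral>x. (cmod (h x))\<^sup>2 \<partial>\<mu>s n) \<longlonglongrightarrow> (\<integral>x. (cmod (h x))\<^sup>2 \<partial>\<mu>)"
    using assms(4) h2 unfolding weak_star_converges_def by blast
  then have "(\<lambda>n. (\<integral>x. (cmod (h x))\<^sup>2 \<partial>\<mu>s n) - (cmod (\<integral>x. h x \<partial>\<mu>s n))\<^sup>2)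
      \<longlonglongrightarrow> (\<integral>x. (cmod (h x))\<^sup>2 \<partial>\<mu>) - (cmod (\<integral>x. h x \<partial>\<mu>))\<^sup>2"
    by (intro tendsto_diff tendsto_power tendsto_norm weak_star_tendsto_integral_complex[OF assms])
  then show ?thesis unfolding variance[OF assms(2)] variance[OF assms(3)] .
qed

lemma tube_uniform:
  fixes \<Phi> :: "'g::topological_space \<times> 'x::topological_space \<Rightarrow> real"
  assumes "compact (UNIV::'x set)" "continuous_on UNIV \<Phi>" "\<eta> > 0"
  obtains U where "open U" "a \<in> U" "\<And>g x. g \<in> U \<Longrightarrow> \<bar>\<Phi> (g, x) - \<Phi> (a, x)\<bar> < \<eta>"
proof -
  define W where "W = (\<lambda>p. \<bar>\<Phi> p - \<Phi> (a, snd p)\<bar>) -` {..<\<eta>}"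
  have "continuous_on UNIV (\<lambda>p::'g \<times> 'x. \<Phi> (a, snd p))"
    by (rule continuous_on_compose2[OF assms(2)])
       (auto intro!: continuous_on_Pair continuous_on_const continuous_on_snd continuous_on_id)
  then have "open W" unfolding W_def using assms(2) by (intro open_vimage continuous_intros) auto
  then have "openin (prod_topology euclidean euclidean) W" by simp
  moreover have "compactin euclidean (UNIV::'x set)" using assms(1) by (simp add: compactin_euclidean_iff)
  moreover have "{a} \<times> UNIV \<subseteq> W" unfolding W_def using assms(3) by auto
  ultimately obtain U V where "openin euclidean U" "a \<in> U" "UNIV \<subseteq> V" "U \<times> V \<subseteq> W"
    using tube_lemma_right by (metis topspace_euclidean UNIV_I)
  then have "open U" "a \<in> U" "\<And>g x. g \<in> U \<Longrightarrow> (g, x) \<in> W" by auto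
  then show ?thesis unfolding W_def by (intro that) auto
qed

lemma weak_star_eventually_uniform_less:
  fixes \<Phi> :: "'g::topological_space \<times> 'x::metric_space \<Rightarrow> real"
  assumes "compact (UNIV::'x set)" "\<And>n. borel_prob (\<mu>s n)" "weak_star_converges \<mu>s \<mu>"
    and "continuous_on UNIV \<Phi>" "compact Q" "\<And>g. g \<in> Q \<Longrightarrow> (\<integral>x. \<Phi> (g, x) \<partial>\<mu>) < c" "\<eta> > 0"
  shows "eventually (\<lambda>n. \<forall>g\<in>Q. (\<integral>x. \<Phi> (g, x) \<partial>\<mu>s n) < c + \<eta>) sequentially"
proof -
  have "\<exists>V. open V \<and> g0 \<in> V \<and> (\<forall>g\<in>V. \<forall>x. \<bar>\<Phi> (g, x) - \<Phi> (g0, x)\<bar> < \<eta>)" for g0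
  proof -
    obtain V where "open V" "g0 \<in> V" "\<And>g x. g \<in> V \<Longrightarrow> \<bar>\<Phi> (g, x) - \<Phi> (g0, x)\<bar> < \<eta>"
      using tube_uniform[OF assms(1,4,7), where a=g0] by blast
    then show ?thesis by blast
  qed
  then obtain U where "\<forall>g0. open (U g0) \<and> g0 \<in> U g0 \<and> (\<forall>g\<in>U g0. \<forall>x. \<bar>\<Phi> (g, x) - \<Phi> (g0, x)\<bar> < \<eta>)"
    using choice[of "\<lambda>g0 V. open V \<and> g0 \<in> V \<and> (\<forall>g\<in>V. \<forall>x. \<bar>\<Phi> (g, x) - \<Phi> (g0, x)\<bar> < \<eta>)"] by blast
  then have U: "\<And>g0. open (U g0)" "\<And>g0. g0 \<in> U g0"
    "\<And>g0 g x. g \<in> U g0 \<Longrightarrow> \<bar>\<Phi> (g, x) - \<Phi> (g0, x)\<bar> < \<eta>"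
    by simp_all
  have "Q \<subseteq> (\<Union>g0\<in>Q. U g0)" using U(2) by blast
  then obtain T where T: "T \<subseteq> Q" "finite T" "Q \<subseteq> (\<Union>g0\<in>T. U g0)"
    by (rule compactE_image[OF assms(5) U(1)])
  have \<Phi>_x: "continuous_on UNIV (\<lambda>x. \<Phi> (g, x))" for g
    by (rule continuous_on_compose2[OF assms(4)]) (auto intro: continuous_intros)
  have "eventually (\<lambda>n. \<forall>g0\<in>T. (\<integral>x. \<Phi> (g0, x) \<partial>\<mu>s n) < c) sequentially"
    using T assms(3,6) \<Phi>_x unfolding weak_star_converges_def
    by (intro eventually_ball_finite ballI order_tendstoD(2)) auto
  then show ?thesis
  proof (rule eventually_mono, intro ballI)
    fix n g assume T_less: "\<forall>g0\<in>T. (\<integral>x. \<Phi> (g0, x) \<partial>\<mu>s n) < c" and "g \<in> Q"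
    then obtain g0 where g0: "g0 \<in> T" "g \<in> U g0" using T(3) by blast
    interpret prob_space "\<mu>s n" using assms(2) unfolding borel_prob_def by simp
    have int: "integrable (\<mu>s n) (\<lambda>x. \<Phi> (h, x))" for h
      using integrable_continuous_on_compact_UNIV[OF assms(1) finite_measure _ \<Phi>_x] assms(2)
      unfolding borel_prob_def by simp
    have "\<Phi> (g, x) \<le> \<Phi> (g0, x) + \<eta>" for x using U(3)[OF g0(2), of x] by (simp add: abs_less_iff)
    then have "(\<integral>x. \<Phi> (g, x) \<partial>\<mu>s n) \<le> (\<integral>x. \<Phi> (g0, x) + \<eta> \<partial>\<mu>s n)"
      using int by (intro integral_mono) auto
    also have "\<dots> = (\<integral>x. \<Phi> (g0, x) \<partial>\<mu>s n) + \<eta>"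
      using int prob_space by (simp add: Bochner_Integration.integral_add)
    also have "\<dots> < c + \<eta>" using T_less g0(1) by simp
    finally show "(\<integral>x. \<Phi> (g, x) \<partial>\<mu>s n) < c + \<eta>" .
  qed
qed

section \<open>Almost invariant vectors\<close>

lemma L2_norm_sq_mean_zero_le:
  fixes f h :: "'a \<Rightarrow> complex"
  assumes M: "prob_space M"
    and f: "f \<in> borel_measurable M" "integrable M (\<lambda>x. (cmod (f x))\<^sup>2)" "(\<integral>x. f x \<partial>M) = 0"
    and h: "h \<in> borel_measurable M" "integrable M (\<lambda>x. (cmod (h x))\<^sup>2)"
  shows "L2_norm_sq M f \<le> 2 * L2_norm_sq M (\<lambda>x. f x - h x) + 2 * L2_norm_sq M (centered M h)"
proof -
  define m where "m = (\<integral>x. h x \<partial>M)"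
  have m2: "integrable M (\<lambda>x. (cmod m)\<^sup>2)" using finite_measure.integrable_const[OF prob_space.finite_measure[OF M]] .
  have fm: "integrable M (\<lambda>x. (cmod (f x - m))\<^sup>2)" using integrable_cmod_diff_power2[OF f(1,2) _ m2] by simp
  have fh: "integrable M (\<lambda>x. (cmod (f x - h x))\<^sup>2)" using integrable_cmod_diff_power2[OF f(1,2) h] .
  have hm: "integrable M (\<lambda>x. (cmod (h x - m))\<^sup>2)" using integrable_cmod_diff_power2[OF h _ m2] by simp
  have "L2_norm_sq M f \<le> (\<integral>x. (cmod (f x - m))\<^sup>2 \<partial>M)"
    using integral_cmod_diff_const_power2[OF M f(1,2), of m] f(3) unfolding L2_norm_sq_def by simp
  also have "\<dots> \<le> (\<integral>x. 2 * (cmod (f x - h x))\<^sup>2 + 2 * (cmod (h x - m))\<^sup>2 \<partial>M)"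
    using fm fh hm cmod_diff_power2_le by (intro integral_mono) auto
  also have "\<dots> = 2 * L2_norm_sq M (\<lambda>x. f x - h x) + 2 * L2_norm_sq M (centered M h)"
    using fh hm unfolding L2_norm_sq_def centered_def m_def by simp
  finally show ?thesis .
qed

lemma almost_inv_L2_0_obtain_continuous:
  fixes act :: "'g::{group_add,topological_space} \<Rightarrow> 'x::metric_space \<Rightarrow> 'x"
  assumes X: "compact (UNIV::'x set)" and act: "continuous_action act"
    and \<mu>: "borel_prob \<mu>" "invariant_measure act \<mu>"
    and "almost_inv_L2_0 act \<mu>" "compact Q" "\<eta> > 0"
  obtains h where "continuous_on UNIV h" "L2_norm_sq \<mu> (centered \<mu> h) > 1/4"
    "\<And>g. g \<in> Q \<Longrightarrow> L2_norm_sq \<mu> (\<lambda>x. koopman act g h x - h x) < \<eta>"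
proof -
  have prob: "prob_space \<mu>" and sets_eq: "sets \<mu> = sets borel" using \<mu>(1) unfolding borel_prob_def by auto
  interpret compact_finite_borel \<mu>
    by (rule compact_finite_borel.intro[OF X prob_space.finite_measure[OF prob] sets_eq])
  have "sqrt (\<eta> / 9) > 0" using assms(7) by simp
  then obtain f where f: "L2_0 \<mu> f" "L2_norm_sq \<mu> f = 1"
    and f_inv: "\<And>g. g \<in> Q \<Longrightarrow> sqrt (L2_norm_sq \<mu> (\<lambda>x. koopman act g f x - f x)) < sqrt (\<eta> / 9)"
    using assms(5)[unfolded almost_inv_L2_0_def, rule_format, OF _ assms(6)] by blast
  have fm: "f \<in> borel_measurable \<mu>" and f2: "integrable \<mu> (\<lambda>x. (cmod (f x))\<^sup>2)"
    and f0: "(\<integral>x. f x \<partial>\<mu>) = 0" using f(1) unfolding L2_0_def by auto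
  define \<delta> where "\<delta> = min (1/8) (\<eta> / 9)"
  have \<delta>: "\<delta> \<le> 1/8" "\<delta> \<le> \<eta> / 9" unfolding \<delta>_def by simp_all
  have "\<delta> > 0" using assms(7) unfolding \<delta>_def by simp
  then obtain h where hc: "continuous_on UNIV h" and fh: "L2_norm_sq \<mu> (\<lambda>x. f x - h x) < \<delta>"
    unfolding L2_norm_sq_def by (rule L2_approx_continuous[OF fm f2])
  have hm: "h \<in> borel_measurable \<mu>" using borel_measurable_continuous_on_sets_borel[OF sets_eq hc] .
  have h2: "integrable \<mu> (\<lambda>x. (cmod (h x))\<^sup>2)"
    by (rule integrable_continuous) (use hc in \<open>intro continuous_intros\<close>)
  show ?thesis
  proof (rule that[OF hc])
    show "L2_norm_sq \<mu> (centered \<mu> h) > 1/4"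
      using L2_norm_sq_mean_zero_le[OF prob fm f2 f0 hm h2] f(2) fh \<delta> by linarith
    fix g assume "g \<in> Q"
    then have "L2_norm_sq \<mu> (\<lambda>x. koopman act g f x - f x) < \<eta> / 9" using f_inv by simp
    moreover have "L2_norm_sq \<mu> (\<lambda>x. koopman act g h x - h x)
        \<le> 6 * L2_norm_sq \<mu> (\<lambda>x. f x - h x) + 3 * L2_norm_sq \<mu> (\<lambda>x. koopman act g f x - f x)"
      by (rule L2_norm_sq_koopman_displacement_le[OF \<mu> act fm f2 hm h2])
    ultimately show "L2_norm_sq \<mu> (\<lambda>x. koopman act g h x - h x) < \<eta>"
      using fh \<delta> by linarith
  qed
qed

lemma L2_0_normalized_centered:
  fixes h :: "'x \<Rightarrow> complex"
  assumes M: "prob_space M" and h: "h \<in> borel_measurable M" "integrable M (\<lambda>x. (cmod (h x))\<^sup>2)"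
    and V: "L2_norm_sq M (centered M h) > c" "c > 0"
    and displacement: "\<And>g. g \<in> Q \<Longrightarrow> L2_norm_sq M (\<lambda>x. koopman act g h x - h x) < r * c"
  obtains F where "L2_0 M F" "L2_norm_sq M F = 1"
    "\<And>g. g \<in> Q \<Longrightarrow> L2_norm_sq M (\<lambda>x. koopman act g F x - F x) < r"
proof
  define s where "s = sqrt (L2_norm_sq M (centered M h))"
  have s: "s > 0" "s\<^sup>2 = L2_norm_sq M (centered M h)" using V unfolding s_def by auto
  define F where "F x = centered M h x / complex_of_real s" for x
  show "L2_0 M F"
    unfolding L2_0_def
  proof (intro conjI)
    show "F \<in> borel_measurable M" using h(1) unfolding F_def centered_def by measurable
    have "integrable M (\<lambda>x. (cmod (h x - (\<integral>x. h x \<partial>M)))\<^sup>2)"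
      by (rule integrable_cmod_diff_power2[OF h borel_measurable_const
            finite_measure.integrable_const[OF prob_space.finite_measure[OF M]]])
    then show "integrable M (\<lambda>x. (cmod (F x))\<^sup>2)"
      unfolding F_def centered_def by (simp add: norm_divide power_divide)
    have "(\<integral>x. h x - (\<integral>y. h y \<partial>M) \<partial>M) = (\<integral>x. h x \<partial>M) - (\<integral>x. (\<integral>y. h y \<partial>M) \<partial>M)"
      by (rule Bochner_Integration.integral_diff[OF
            integrable_if_square_integrable[OF prob_space.finite_measure[OF M] h]
            finite_measure.integrable_const[OF prob_space.finite_measure[OF M]]])
    then have "(\<integral>x. h x - (\<integral>y. h y \<partial>M) \<partial>M) = 0"
      using prob_space.prob_space[OF M] by simp
    then show "(\<integral>x. F x \<partial>M) = 0" unfolding F_def centered_def by simp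
  qed
  show "L2_norm_sq M F = 1"
    using s V unfolding L2_norm_sq_def F_def by (simp add: norm_divide power_divide)
  show "L2_norm_sq M (\<lambda>x. koopman act g F x - F x) < r" if "g \<in> Q" for g
  proof -
    have "koopman act g F x - F x = (koopman act g h x - h x) / complex_of_real s" for x
      unfolding F_def koopman_def centered_def by (simp add: diff_divide_distrib)
    then have eq: "L2_norm_sq M (\<lambda>x. koopman act g F x - F x) = L2_norm_sq M (\<lambda>x. koopman act g h x - h x) / s\<^sup>2"
      unfolding L2_norm_sq_def by (simp add: norm_divide power_divide)
    have "0 \<le> L2_norm_sq M (\<lambda>x. koopman act g h x - h x)" unfolding L2_norm_sq_def by simp
    then have "0 < r * c" using displacement[OF that] by linarith
    then have "r > 0" using V(2) by (simp add: zero_less_mult_iff)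
    then have "r * c < r * s\<^sup>2" using V s by simp
    then have "L2_norm_sq M (\<lambda>x. koopman act g h x - h x) < r * s\<^sup>2" using displacement[OF that] by linarith
    then show ?thesis unfolding eq using s(1) by (simp add: divide_less_eq)
  qed
qed

lemma almost_inv_direct_sumI:
  assumes "\<And>Q \<epsilon>. compact Q \<Longrightarrow> \<epsilon> > 0 \<Longrightarrow> \<exists>N F. L2_0 (M N) F \<and> L2_norm_sq (M N) F = 1 \<and>
             (\<forall>g\<in>Q. L2_norm_sq (M N) (\<lambda>x. koopman act g F x - F x) < \<epsilon>\<^sup>2)"
  shows "almost_inv_direct_sum act M"
  unfolding almost_inv_direct_sum_def
proof (intro allI impI)
  fix Q :: "'a set" and \<epsilon> :: real assume "\<epsilon> > 0" "compact Q"
  then obtain N F where F: "L2_0 (M N) F" "L2_norm_sq (M N) F = 1"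
    "\<And>g. g \<in> Q \<Longrightarrow> L2_norm_sq (M N) (\<lambda>x. koopman act g F x - F x) < \<epsilon>\<^sup>2"
    using assms[OF \<open>compact Q\<close> \<open>\<epsilon> > 0\<close>] by blast
  define f where "f n = (if n = N then F else (\<lambda>x. 0))" for n
  have "\<forall>n. L2_0 (M n) (f n)" using F(1) unfolding f_def L2_0_def by simp
  moreover have "(\<lambda>n. L2_norm_sq (M n) (f n)) = (\<lambda>n. if n = N then 1 else 0)"
    using F(2) by (auto simp: f_def L2_norm_sq_def)
  then have "(\<lambda>n. L2_norm_sq (M n) (f n)) sums 1" using sums_single[of N "\<lambda>_. 1::real"] by simp
  moreover have "\<forall>g\<in>Q. summable (\<lambda>n. L2_norm_sq (M n) (\<lambda>x. koopman act g (f n) x - f n x)) \<and>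
      sqrt (\<Sum>n. L2_norm_sq (M n) (\<lambda>x. koopman act g (f n) x - f n x)) < \<epsilon>"
  proof
    fix g assume "g \<in> Q"
    define d where "d = L2_norm_sq (M N) (\<lambda>x. koopman act g F x - F x)"
    have "(\<lambda>n. L2_norm_sq (M n) (\<lambda>x. koopman act g (f n) x - f n x)) = (\<lambda>n. if n = N then d else 0)"
      by (auto simp: f_def d_def L2_norm_sq_def koopman_def)
    then have "(\<lambda>n. L2_norm_sq (M n) (\<lambda>x. koopman act g (f n) x - f n x)) sums d"
      using sums_single[of N "\<lambda>_. d"] by simp
    moreover have "sqrt d < \<epsilon>"
      using F(3)[OF \<open>g \<in> Q\<close>] \<open>\<epsilon> > 0\<close> real_sqrt_less_iff[of d "\<epsilon>\<^sup>2"] unfolding d_def by simp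
    ultimately show "summable (\<lambda>n. L2_norm_sq (M n) (\<lambda>x. koopman act g (f n) x - f n x)) \<and>
      sqrt (\<Sum>n. L2_norm_sq (M n) (\<lambda>x. koopman act g (f n) x - f n x)) < \<epsilon>"
      by (simp add: sums_iff)
  qed
  ultimately show "\<exists>f. (\<forall>n. L2_0 (M n) (f n)) \<and> (\<lambda>n. L2_norm_sq (M n) (f n)) sums 1 \<and>
      (\<forall>g\<in>Q. summable (\<lambda>n. L2_norm_sq (M n) (\<lambda>x. koopman act g (f n) x - f n x)) \<and>
        sqrt (\<Sum>n. L2_norm_sq (M n) (\<lambda>x. koopman act g (f n) x - f n x)) < \<epsilon>)"
    by (intro exI[of _ f] conjI)
qed

lemma weak_star_eventually_almost_invariant:
  fixes act :: "'g::topological_group_add \<Rightarrow> 'x::metric_space \<Rightarrow> 'x"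
  assumes "compact (UNIV::'x set)" "\<And>n. borel_prob (\<mu>s n)" "borel_prob \<mu>" "weak_star_converges \<mu>s \<mu>"
    and "continuous_action act" "continuous_on UNIV h" "compact Q"
    and "L2_norm_sq \<mu> (centered \<mu> h) > c"
    and "\<And>g. g \<in> Q \<Longrightarrow> L2_norm_sq \<mu> (\<lambda>x. koopman act g h x - h x) < \<eta>" "\<eta> < \<eta>'"
  shows "eventually (\<lambda>n. L2_norm_sq (\<mu>s n) (centered (\<mu>s n) h) > c \<and>
    (\<forall>g\<in>Q. L2_norm_sq (\<mu>s n) (\<lambda>x. koopman act g h x - h x) < \<eta>')) sequentially"
proof (rule eventually_conj)
  show "eventually (\<lambda>n. L2_norm_sq (\<mu>s n) (centered (\<mu>s n) h) > c) sequentially"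
    by (rule order_tendstoD(1)[OF weak_star_tendsto_L2_norm_sq_centered[OF assms(1-4,6)] assms(8)])
  show "eventually (\<lambda>n. \<forall>g\<in>Q. L2_norm_sq (\<mu>s n) (\<lambda>x. koopman act g h x - h x) < \<eta>') sequentially"
    using weak_star_eventually_uniform_less[OF assms(1,2,4) continuous_on_koopman_displacement[OF assms(5,6)]
        assms(7), of \<eta> "\<eta>' - \<eta>"] assms(9,10)
    unfolding L2_norm_sq_def by simp
qed

theorem proposition2p1:
  fixes act :: "'g::{topological_group_add, t2_space, second_countable_topology} \<Rightarrow> 'x::metric_space \<Rightarrow> 'x"
    and \<mu>s :: "nat \<Rightarrow> 'x measure"
    and \<mu> :: "'x measure"
  assumes "locally_compact_space (euclidean :: 'g topology)"
    and "compactly_generated TYPE('g)"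
    and "compact (UNIV :: 'x set)"
    and "continuous_action act"
    and "\<And>n. borel_prob (\<mu>s n)"
    and "\<And>n. invariant_measure act (\<mu>s n)"
    and "uniform_spectral_gap act \<mu>s"
    and "borel_prob \<mu>"
    and "weak_star_converges \<mu>s \<mu>"
  shows "spectral_gap act \<mu>"
  unfolding spectral_gap_def
proof
  assume almost_inv: "almost_inv_L2_0 act \<mu>"
  have inv: "invariant_measure act \<mu>" by (rule weak_star_limit_invariant[OF assms(4,5,6,8,9)])
  have "almost_inv_direct_sum act \<mu>s"
  proof (rule almost_inv_direct_sumI)
    fix Q :: "'g set" and \<epsilon> :: real assume Q: "compact Q" and "\<epsilon> > 0"
    then have \<eta>: "\<epsilon>\<^sup>2 / 8 > 0" "\<epsilon>\<^sup>2 / 8 < \<epsilon>\<^sup>2 * (1/4)" by simp_all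
    obtain h where h: "continuous_on UNIV h" "L2_norm_sq \<mu> (centered \<mu> h) > 1/4"
      "\<And>g. g \<in> Q \<Longrightarrow> L2_norm_sq \<mu> (\<lambda>x. koopman act g h x - h x) < \<epsilon>\<^sup>2 / 8"
      by (rule almost_inv_L2_0_obtain_continuous[OF assms(3,4,8) inv almost_inv Q \<eta>(1)]) blast
    obtain N where V: "L2_norm_sq (\<mu>s N) (centered (\<mu>s N) h) > 1/4"
      and displacement: "\<And>g. g \<in> Q \<Longrightarrow> L2_norm_sq (\<mu>s N) (\<lambda>x. koopman act g h x - h x) < \<epsilon>\<^sup>2 * (1/4)"
      using eventually_happens'[OF sequentially_bot
          weak_star_eventually_almost_invariant[OF assms(3,5,8,9,4) h(1) Q h(2,3) \<eta>(2)]] by blast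
    have N: "prob_space (\<mu>s N)" "sets (\<mu>s N) = sets borel" using assms(5) unfolding borel_prob_def by auto
    have h2: "continuous_on UNIV (\<lambda>x. (cmod (h x))\<^sup>2)" using h(1) by (intro continuous_intros)
    obtain F where "L2_0 (\<mu>s N) F" "L2_norm_sq (\<mu>s N) F = 1"
      "\<And>g. g \<in> Q \<Longrightarrow> L2_norm_sq (\<mu>s N) (\<lambda>x. koopman act g F x - F x) < \<epsilon>\<^sup>2"
      using L2_0_normalized_centered[where Q=Q, OF N(1) borel_measurable_continuous_on_sets_borel[OF N(2) h(1)]
          integrable_continuous_on_compact_UNIV[OF assms(3) prob_space.finite_measure[OF N(1)] N(2) h2]
          V _ displacement] by (simp, blast)
    then show "\<exists>N F. L2_0 (\<mu>s N) F \<and> L2_norm_sq (\<mu>s N) F = 1 \<and>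
        (\<forall>g\<in>Q. L2_norm_sq (\<mu>s N) (\<lambda>x. koopman act g F x - F x) < \<epsilon>\<^sup>2)"
      by blast
  qed
  then show False using assms(7) unfolding uniform_spectral_gap_def by simp
qed

end
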